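(* Let $G$ be a Tanner graph and $S$ a stopping set in $G$, and let $t_S$ denote the largest component that an irreducible lift-realizable pseudocodeword of $G$ with support $S$ may have. If $S$ is a minimal stopping set and does not have property $\Theta$, then every pseudocodeword with support $S$ has maximal component 1 or 2; that is, $t_S=1$ or $t_S=2$.
   Context: A Tanner graph $G$ is a finite bipartite graph with variable nodes $v_1,\dots,v_n$ and check nodes; its code consists of all $x\in\{0,1\}^n$ with every check node having an even number of neighbours $v_i$ with $x_i=1$. A degree-$\ell$ lift replaces each node by $\ell$ copies and each edge by a perfect matching between copy-sets; a lift-realizable pseudocodeword $p\in\mathbb{Z}_{\ge0}^n$ is obtained from a codeword of the code of a finite lift by letting $p_i$ be the number of copies of $v_i$ assigned 1; its support is $\{v_i:p_i\ne0\}$; it is irreducible if it is not a sum of two or more nonzero codewords/pseudocodewords. A stopping set is a nonempty set $S$ of variable nodes such that every check node adjacent to $S$ is adjacent to at least two nodes of $S$; it is minimal if it contains no strictly smaller nonempty stopping set. $G_{|_S}$ is the subgraph induced by $S$ and its neighbouring check nodes. $S$ has property $\Theta$ if it contains a pair of variable nodes not joined by any path in $G_{|_S}$ passing only through check nodes of degree two. *)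

theory Defs
  imports Main
begin

definition tanner_graph :: "'v set \<Rightarrow> 'c set \<Rightarrow> ('v \<times> 'c) set \<Rightarrow> bool" where
  "tanner_graph V C E \<longleftrightarrow> finite V \<and> finite C \<and> E \<subseteq> V \<times> C"

text \<open>A degree-l lift: node v becomes copies (v,i), i<l; edge e=(v,c) becomes the perfect
  matching (v,i) -- (c, pi e i), with pi e a bijection of {..<l}.\<close>
definition lift_codeword ::
  "'c set \<Rightarrow> ('v \<times> 'c) set \<Rightarrow> nat \<Rightarrow> ('v \<times> 'c \<Rightarrow> nat \<Rightarrow> nat) \<Rightarrow> ('v \<times> nat \<Rightarrow> bool) \<Rightarrow> bool" where
  "lift_codeword C E l pi x \<longleftrightarrow>
     (\<forall>c\<in>C. \<forall>j<l. even (card {(v, i). (v, c) \<in> E \<and> i < l \<and> pi (v, c) i = j \<and> x (v, i)}))"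

definition lift_realizable :: "'v set \<Rightarrow> 'c set \<Rightarrow> ('v \<times> 'c) set \<Rightarrow> ('v \<Rightarrow> nat) \<Rightarrow> bool" where
  "lift_realizable V C E p \<longleftrightarrow>
     (\<exists>l pi x. l \<ge> 1 \<and> (\<forall>e\<in>E. bij_betw (pi e) {..<l} {..<l}) \<and>
        lift_codeword C E l pi x \<and>
        (\<forall>v. p v = (if v \<in> V then card {i. i < l \<and> x (v, i)} else 0)))"

definition support :: "'v set \<Rightarrow> ('v \<Rightarrow> nat) \<Rightarrow> 'v set" where
  "support V p = {v \<in> V. p v \<noteq> 0}"

definition irreducible_pcw :: "'v set \<Rightarrow> 'c set \<Rightarrow> ('v \<times> 'c) set \<Rightarrow> ('v \<Rightarrow> nat) \<Rightarrow> bool" where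
  "irreducible_pcw V C E p \<longleftrightarrow>
     lift_realizable V C E p \<and> p \<noteq> (\<lambda>_. 0) \<and>
     \<not> (\<exists>ps. length ps \<ge> 2 \<and>
            (\<forall>q\<in>set ps. lift_realizable V C E q \<and> q \<noteq> (\<lambda>_. 0)) \<and>
            p = (\<lambda>v. sum_list (map (\<lambda>q. q v) ps)))"

definition stopping_set :: "'v set \<Rightarrow> 'c set \<Rightarrow> ('v \<times> 'c) set \<Rightarrow> 'v set \<Rightarrow> bool" where
  "stopping_set V C E S \<longleftrightarrow> S \<noteq> {} \<and> S \<subseteq> V \<and>
     (\<forall>c\<in>C. (\<exists>v\<in>S. (v, c) \<in> E) \<longrightarrow> card {v \<in> S. (v, c) \<in> E} \<ge> 2)"

definition minimal_stopping_set :: "'v set \<Rightarrow> 'c set \<Rightarrow> ('v \<times> 'c) set \<Rightarrow> 'v set \<Rightarrow> bool" where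
  "minimal_stopping_set V C E S \<longleftrightarrow> stopping_set V C E S \<and>
     (\<forall>T. T \<subset> S \<longrightarrow> \<not> stopping_set V C E T)"

definition deg2_step :: "'c set \<Rightarrow> ('v \<times> 'c) set \<Rightarrow> 'v set \<Rightarrow> ('v \<times> 'v) set" where
  "deg2_step C E S = {(u, w). u \<in> S \<and> w \<in> S \<and>
     (\<exists>c\<in>C. (u, c) \<in> E \<and> (w, c) \<in> E \<and> card {v \<in> S. (v, c) \<in> E} = 2)}"

definition property_Theta :: "'c set \<Rightarrow> ('v \<times> 'c) set \<Rightarrow> 'v set \<Rightarrow> bool" where
  "property_Theta C E S \<longleftrightarrow>
     (\<exists>u\<in>S. \<exists>w\<in>S. u \<noteq> w \<and> (u, w) \<notin> (deg2_step C E S)\<^sup>*)"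

definition max_components :: "'v set \<Rightarrow> 'c set \<Rightarrow> ('v \<times> 'c) set \<Rightarrow> 'v set \<Rightarrow> nat set" where
  "max_components V C E S =
     {Max (p ` V) | p. irreducible_pcw V C E p \<and> support V p = S}"

definition t_S :: "'v set \<Rightarrow> 'c set \<Rightarrow> ('v \<times> 'c) set \<Rightarrow> 'v set \<Rightarrow> nat" where
  "t_S V C E S = Max (max_components V C E S)"

end

theory Submission
  imports Defs "HOL-Combinatorics.Transposition"
begin

text \<open>Without property \<Theta> any two nodes of S are joined by a chain of check nodes of degree two
  in G|_S, and across such a check the copies assigned 1 of one neighbour are matched with those
  of the other; so a pseudocodeword supported in S is a multiple k of the indicator of S. By
  minimality of S, every summand of such a pseudocodeword is again of this form. If every check
  node has an even number of neighbours in S, the indicator of S is a codeword and k = 1 is the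
  only irreducible weight. Otherwise a check node with an odd number of neighbours in S forces k
  to be even by double counting, while twice the indicator is realized on a degree-3 lift; as
  pseudocodewords add under disjoint union of lifts, k = 2 is then the only irreducible weight.\<close>

section \<open>Lifts\<close>

definition ones_at_check :: "('v \<times> 'c) set \<Rightarrow> nat \<Rightarrow> ('v \<times> 'c \<Rightarrow> nat \<Rightarrow> nat) \<Rightarrow>
    ('v \<times> nat \<Rightarrow> bool) \<Rightarrow> 'c \<Rightarrow> nat \<Rightarrow> ('v \<times> nat) set" where
  "ones_at_check E l pi x c j = {(v, i). (v, c) \<in> E \<and> i < l \<and> pi (v, c) i = j \<and> x (v, i)}"

lemma lift_codeword_iff:
  "lift_codeword C E l pi x \<longleftrightarrow> (\<forall>c\<in>C. \<forall>j<l. even (card (ones_at_check E l pi x c j)))"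
  by (simp add: lift_codeword_def ones_at_check_def)

lemma lift_realizableE:
  assumes "lift_realizable V C E p"
  obtains l pi x where "l \<ge> 1" "\<And>e. e \<in> E \<Longrightarrow> bij_betw (pi e) {..<l} {..<l}"
    "lift_codeword C E l pi x" "\<And>v. p v = (if v \<in> V then card {i. i < l \<and> x (v, i)} else 0)"
  using assms unfolding lift_realizable_def by blast

lemma lift_realizable_zero: "lift_realizable V C E (\<lambda>_. 0)"
  unfolding lift_realizable_def lift_codeword_def
  by (rule exI[of _ 1], rule exI[of _ "\<lambda>_. id"], rule exI[of _ "\<lambda>_. False"]) simp

lemma lift_realizable_outside: "lift_realizable V C E p \<Longrightarrow> v \<notin> V \<Longrightarrow> p v = 0"
  unfolding lift_realizable_def by auto

lemma bij_betw_append: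
  fixes f g :: "nat \<Rightarrow> nat"
  assumes f: "bij_betw f {..<m} {..<m}" and g: "bij_betw g {..<n} {..<n}"
  shows "bij_betw (\<lambda>i. if i < m then f i else m + g (i - m)) {..<m + n} {..<m + n}"
    (is "bij_betw ?h _ _")
proof -
  have fm: "f i < m" if "i < m" for i using f that by (auto simp: bij_betw_def)
  have gn: "g i < n" if "i < n" for i using g that by (auto simp: bij_betw_def)
  have "inj_on ?h {..<m + n}"
  proof (rule inj_onI)
    fix i j assume i: "i \<in> {..<m + n}" and j: "j \<in> {..<m + n}" and eq: "?h i = ?h j"
    show "i = j"
    proof (cases "i < m"; cases "j < m")
      assume "i < m" "j < m"
      with eq have "f i = f j" by simp
      with \<open>i < m\<close> \<open>j < m\<close> show ?thesis using bij_betw_imp_inj_on[OF f] by (simp add: inj_on_eq_iff)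
    next
      assume "\<not> i < m" "\<not> j < m"
      with eq have "g (i - m) = g (j - m)" by simp
      with i j \<open>\<not> i < m\<close> \<open>\<not> j < m\<close> have "i - m = j - m"
        using bij_betw_imp_inj_on[OF g] by (simp add: inj_on_eq_iff less_diff_conv2)
      with \<open>\<not> i < m\<close> \<open>\<not> j < m\<close> show ?thesis by simp
    next
      assume "i < m" "\<not> j < m"
      with eq fm show ?thesis by (metis not_add_less1)
    next
      assume "\<not> i < m" "j < m"
      with eq fm show ?thesis by (metis not_add_less1)
    qed
  qed
  moreover have "?h ` {..<m + n} \<subseteq> {..<m + n}" using fm gn by (fastforce simp: trans_less_add1)
  ultimately show ?thesis unfolding bij_betw_def using endo_inj_surj[OF finite_lessThan] by blast
qed
lemma card_Collect_append:
  fixes m n :: nat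
  shows "card {i. i < m + n \<and> (if i < m then P i else Q (i - m))}
    = card {i. i < m \<and> P i} + card {i. i < n \<and> Q i}"
proof -
  have "{i. i < m + n \<and> (if i < m then P i else Q (i - m))} = {i. i < m \<and> P i} \<union> (+) m ` {i. i < n \<and> Q i}"
  proof (intro equalityI subsetI)
    fix i assume "i \<in> {i. i < m + n \<and> (if i < m then P i else Q (i - m))}"
    then show "i \<in> {i. i < m \<and> P i} \<union> (+) m ` {i. i < n \<and> Q i}"
      by (cases "i < m") (auto simp: image_iff intro!: exI[of _ "i - m"])
  qed auto
  moreover have "card ({i. i < m \<and> P i} \<union> (+) m ` {i. i < n \<and> Q i})
      = card {i. i < m \<and> P i} + card ((+) m ` {i. i < n \<and> Q i})"
    by (rule card_Un_disjoint) auto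
  moreover have "card ((+) m ` {i. i < n \<and> Q i}) = card {i. i < n \<and> Q i}"
    by (rule card_image) simp
  ultimately show ?thesis by simp
qed

lemma lift_codeword_append:
  assumes pi1: "\<And>e. e \<in> E \<Longrightarrow> bij_betw (pi1 e) {..<m} {..<m}"
    and x1: "lift_codeword C E m pi1 x1" and x2: "lift_codeword C E n pi2 x2"
  defines "pi \<equiv> \<lambda>e i. if i < m then pi1 e i else m + pi2 e (i - m)"
    and "x \<equiv> \<lambda>(v, i). if i < m then x1 (v, i) else x2 (v, i - m)"
  shows "lift_codeword C E (m + n) pi x"
  unfolding lift_codeword_iff
proof (intro ballI allI impI)
  fix c j assume c: "c \<in> C" and j: "j < m + n"
  have pi1_lt: "pi1 (v, c) i < m" if "(v, c) \<in> E" "i < m" for v i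
    using pi1[OF that(1)] that(2) by (auto simp: bij_betw_def)
  show "even (card (ones_at_check E (m + n) pi x c j))"
  proof (cases "j < m")
    case True
    then have "ones_at_check E (m + n) pi x c j = ones_at_check E m pi1 x1 c j"
      by (auto simp: ones_at_check_def pi_def x_def)
    then show ?thesis using x1 c True by (simp add: lift_codeword_iff)
  next
    case False
    let ?shift = "\<lambda>(v, i). (v, m + i)"
    have "ones_at_check E (m + n) pi x c j = ?shift ` ones_at_check E n pi2 x2 c (j - m)"
    proof (intro equalityI subsetI)
      fix vi assume vi: "vi \<in> ones_at_check E (m + n) pi x c j"
      then obtain v i where "vi = (v, i)" "(v, c) \<in> E" by (auto simp: ones_at_check_def)
      with vi False pi1_lt have "\<not> i < m" by (fastforce simp: ones_at_check_def pi_def)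
      with vi \<open>vi = (v, i)\<close> have "(v, i - m) \<in> ones_at_check E n pi2 x2 c (j - m)" "vi = (v, m + (i - m))"
        by (auto simp: ones_at_check_def pi_def x_def)
      then show "vi \<in> ?shift ` ones_at_check E n pi2 x2 c (j - m)" by force
    next
      fix vi assume "vi \<in> ?shift ` ones_at_check E n pi2 x2 c (j - m)"
      with False show "vi \<in> ones_at_check E (m + n) pi x c j"
        by (auto simp: ones_at_check_def pi_def x_def)
    qed
    moreover have "inj_on ?shift (ones_at_check E n pi2 x2 c (j - m))"
      by (auto simp: inj_on_def)
    ultimately have "card (ones_at_check E (m + n) pi x c j) = card (ones_at_check E n pi2 x2 c (j - m))"
      using card_image by metis
    then show ?thesis using x2 c False j by (simp add: lift_codeword_iff)
  qed
qed

text \<open>Pseudocodewords add by taking the disjoint union of the two lifts.\<close>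
lemma lift_realizable_add:
  assumes p: "lift_realizable V C E p" and q: "lift_realizable V C E q"
  shows "lift_realizable V C E (\<lambda>v. p v + q v)"
proof -
  obtain m pi1 x1 where m: "m \<ge> 1" and pi1: "\<And>e. e \<in> E \<Longrightarrow> bij_betw (pi1 e) {..<m} {..<m}"
    and x1: "lift_codeword C E m pi1 x1"
    and p_eq: "\<And>v. p v = (if v \<in> V then card {i. i < m \<and> x1 (v, i)} else 0)"
    by (rule lift_realizableE[OF p]) blast
  obtain n pi2 x2 where pi2: "\<And>e. e \<in> E \<Longrightarrow> bij_betw (pi2 e) {..<n} {..<n}"
    and x2: "lift_codeword C E n pi2 x2"
    and q_eq: "\<And>v. q v = (if v \<in> V then card {i. i < n \<and> x2 (v, i)} else 0)"
    by (rule lift_realizableE[OF q]) blast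
  define pi where "pi = (\<lambda>e i. if i < m then pi1 e i else m + pi2 e (i - m))"
  define x where "x = (\<lambda>(v, i). if i < m then x1 (v, i) else x2 (v, i - m))"
  have "lift_codeword C E (m + n) pi x"
    unfolding pi_def x_def by (rule lift_codeword_append[OF pi1 x1 x2])
  moreover have "\<forall>e\<in>E. bij_betw (pi e) {..<m + n} {..<m + n}"
    using bij_betw_append[OF pi1 pi2] by (simp add: pi_def)
  moreover have "p v + q v = (if v \<in> V then card {i. i < m + n \<and> x (v, i)} else 0)" for v
    using card_Collect_append[of m n "\<lambda>i. x1 (v, i)" "\<lambda>i. x2 (v, i)"] by (simp add: p_eq q_eq x_def)
  ultimately show ?thesis using m unfolding lift_realizable_def by (intro exI[of _ "m + n"]) auto
qed

lemma lift_realizable_mult: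
  assumes "lift_realizable V C E p"
  shows "lift_realizable V C E (\<lambda>v. k * p v)"
proof (induction k)
  case 0
  then show ?case by (simp add: lift_realizable_zero)
next
  case (Suc k)
  then show ?case using lift_realizable_add[OF assms Suc.IH] by simp
qed

lemma lift_realizable_sum_list:
  assumes "\<forall>q\<in>set ps. lift_realizable V C E q"
  shows "lift_realizable V C E (\<lambda>v. \<Sum>q\<leftarrow>ps. q v)"
  using assms by (induction ps) (simp_all add: lift_realizable_zero lift_realizable_add)

section \<open>Supports of pseudocodewords\<close>

lemma ones_at_check_other:
  assumes inj: "inj_on (pi (v, c)) {..<l}" and even: "even (card (ones_at_check E l pi x c j))"
    and vi: "(v, i) \<in> ones_at_check E l pi x c j"
  obtains w i' where "(w, i') \<in> ones_at_check E l pi x c j" "w \<noteq> v"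
proof -
  have "ones_at_check E l pi x c j \<noteq> {(v, i)}" using even by auto
  with vi obtain wi where "wi \<in> ones_at_check E l pi x c j" "wi \<noteq> (v, i)" by blast
  then obtain w i' where wi: "(w, i') \<in> ones_at_check E l pi x c j" "(w, i') \<noteq> (v, i)"
    by (cases wi) blast
  have "w \<noteq> v"
  proof
    assume "w = v"
    with wi vi have "pi (v, c) i' = pi (v, c) i" "i' < l" "i < l" "i' \<noteq> i"
      by (auto simp: ones_at_check_def)
    with inj show False by (auto dest: inj_onD)
  qed
  with wi(1) show thesis by (rule that)
qed

lemma lift_codeword_other_one:
  assumes bij: "\<And>e. e \<in> E \<Longrightarrow> bij_betw (pi e) {..<l} {..<l}" and cw: "lift_codeword C E l pi x"
    and c: "c \<in> C" and vc: "(v, c) \<in> E" and i: "i < l" "x (v, i)"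
  obtains w i' where "w \<noteq> v" "(w, c) \<in> E" "i' < l" "pi (w, c) i' = pi (v, c) i" "x (w, i')"
proof -
  have "pi (v, c) i < l" using bij[OF vc] i by (auto simp: bij_betw_def)
  with cw c have "even (card (ones_at_check E l pi x c (pi (v, c) i)))" by (simp add: lift_codeword_iff)
  moreover have "(v, i) \<in> ones_at_check E l pi x c (pi (v, c) i)" using vc i by (simp add: ones_at_check_def)
  ultimately obtain w i' where "(w, i') \<in> ones_at_check E l pi x c (pi (v, c) i)" "w \<noteq> v"
    using ones_at_check_other bij_betw_imp_inj_on[OF bij[OF vc]] by metis
  then show thesis using that[of w i'] by (auto simp: ones_at_check_def)
qed

lemma support_of_lift_one:
  fixes l :: nat
  assumes tg: "tanner_graph V C E"
    and p_eq: "\<And>v. p v = (if v \<in> V then card {i. i < l \<and> x (v, i)} else 0)"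
    and "(w, c) \<in> E" "i < l" "x (w, i)"
  shows "w \<in> support V p"
proof -
  have "w \<in> V" using assms by (auto simp: tanner_graph_def)
  moreover have "{i. i < l \<and> x (w, i)} \<noteq> {}" using assms by auto
  ultimately show ?thesis by (simp add: support_def p_eq card_gt_0_iff)
qed

lemma stopping_set_support:
  assumes tg: "tanner_graph V C E" and p: "lift_realizable V C E p" and nz: "p \<noteq> (\<lambda>_. 0)"
  shows "stopping_set V C E (support V p)"
proof -
  obtain l pi x where bij: "\<And>e. e \<in> E \<Longrightarrow> bij_betw (pi e) {..<l} {..<l}"
    and cw: "lift_codeword C E l pi x" and p_eq: "\<And>v. p v = (if v \<in> V then card {i. i < l \<and> x (v, i)} else 0)"
    by (rule lift_realizableE[OF p]) blast
  have finV: "finite V" using tg by (simp add: tanner_graph_def)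
  have "card {v \<in> support V p. (v, c) \<in> E} \<ge> 2" if c: "c \<in> C" and v: "v \<in> support V p" "(v, c) \<in> E" for c v
  proof -
    have "{i. i < l \<and> x (v, i)} \<noteq> {}" using v by (auto simp: support_def p_eq card_gt_0_iff)
    then obtain i where "i < l" "x (v, i)" by auto
    then obtain w i' where "w \<noteq> v" "(w, c) \<in> E" "i' < l" "x (w, i')"
      using lift_codeword_other_one[OF bij cw c v(2)] by metis
    then have "{v, w} \<subseteq> {v \<in> support V p. (v, c) \<in> E}"
      using v support_of_lift_one[OF tg p_eq] by auto
    moreover have "finite {v \<in> support V p. (v, c) \<in> E}" using finV by (simp add: support_def)
    ultimately show ?thesis using \<open>w \<noteq> v\<close> by (metis card_2_iff card_mono)
  qed
  moreover obtain v where "p v \<noteq> 0" using nz by auto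
  then have "v \<in> support V p" using lift_realizable_outside[OF p, of v] by (auto simp: support_def)
  ultimately show ?thesis by (auto simp: stopping_set_def support_def)
qed

text \<open>The only other neighbour of the check node that can carry ones is w, so the check copies
  match the copies of u assigned 1 injectively with copies of w assigned 1.\<close>
lemma lift_realizable_le_deg2_step:
  assumes tg: "tanner_graph V C E" and p: "lift_realizable V C E p"
    and supp: "support V p \<subseteq> T" and uw: "(u, w) \<in> deg2_step C E T"
  shows "p u \<le> p w"
proof (cases "u = w")
  case False
  obtain l pi x where bij: "\<And>e. e \<in> E \<Longrightarrow> bij_betw (pi e) {..<l} {..<l}"
    and cw: "lift_codeword C E l pi x" and p_eq: "\<And>v. p v = (if v \<in> V then card {i. i < l \<and> x (v, i)} else 0)"
    by (rule lift_realizableE[OF p]) blast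
  obtain c where c: "c \<in> C" "(u, c) \<in> E" "(w, c) \<in> E" and two: "card {v \<in> T. (v, c) \<in> E} = 2"
    and uT: "u \<in> T" and wT: "w \<in> T"
    using uw by (auto simp: deg2_step_def)
  have "{u, w} \<subseteq> {v \<in> T. (v, c) \<in> E}" using c uT wT by auto
  then have nbrs: "{v \<in> T. (v, c) \<in> E} = {u, w}"
    using two False by (metis card_2_iff card_subset_eq card.infinite zero_neq_numeral)
  have uV: "u \<in> V" and wV: "w \<in> V" using c tg by (auto simp: tanner_graph_def)
  define Iu where "Iu = {i. i < l \<and> x (u, i)}"
  define Iw where "Iw = {i. i < l \<and> x (w, i)}"
  have "pi (u, c) ` Iu \<subseteq> pi (w, c) ` Iw"
  proof
    fix j assume "j \<in> pi (u, c) ` Iu"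
    then obtain i where i: "i < l" "x (u, i)" "j = pi (u, c) i" by (auto simp: Iu_def)
    then obtain w' i' where w': "w' \<noteq> u" "(w', c) \<in> E" "i' < l" "pi (w', c) i' = j" "x (w', i')"
      using lift_codeword_other_one[OF bij cw c(1,2)] by metis
    have "w' \<in> T" using supp support_of_lift_one[OF tg p_eq w'(2,3,5)] by blast
    with w' nbrs have "w' = w" by blast
    with w' show "j \<in> pi (w, c) ` Iw" by (auto simp: Iw_def)
  qed
  moreover have "inj_on (pi (u, c)) Iu"
    using bij_betw_imp_inj_on[OF bij[OF c(2)]] by (rule inj_on_subset) (auto simp: Iu_def)
  ultimately have "card Iu \<le> card (pi (w, c) ` Iw)"
    by (metis card_image card_mono finite_imageI finite_Collect_conjI finite_Collect_less_nat Iw_def)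
  also have "\<dots> \<le> card Iw" by (rule card_image_le) (simp add: Iw_def)
  finally show ?thesis using uV wV by (simp add: p_eq Iu_def Iw_def)
qed simp

lemma lift_realizable_const_on:
  assumes tg: "tanner_graph V C E" and p: "lift_realizable V C E p"
    and supp: "support V p \<subseteq> S" and nt: "\<not> property_Theta C E S"
    and u: "u \<in> S" and w: "w \<in> S"
  shows "p u = p w"
proof -
  have le: "p a \<le> p b" if "(a, b) \<in> (deg2_step C E S)\<^sup>*" for a b
    using that
  proof (induction rule: rtrancl_induct)
    case (step b b')
    then show ?case using lift_realizable_le_deg2_step[OF tg p supp step(2)] by simp
  qed simp
  have "(u, w) \<in> (deg2_step C E S)\<^sup>*" "(w, u) \<in> (deg2_step C E S)\<^sup>*"
    using nt u w by (auto simp: property_Theta_def)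
  then show ?thesis using le by (meson antisym)
qed

section \<open>Multiples of the indicator of a stopping set\<close>

definition scaled_indicator :: "'v set \<Rightarrow> nat \<Rightarrow> 'v \<Rightarrow> nat" where
  "scaled_indicator S k v = (if v \<in> S then k else 0)"

lemma support_scaled_indicator: "S \<subseteq> V \<Longrightarrow> k \<noteq> 0 \<Longrightarrow> support V (scaled_indicator S k) = S"
  by (auto simp: support_def scaled_indicator_def)

lemma scaled_indicator_eq_zero_iff: "scaled_indicator S k = (\<lambda>_. 0) \<longleftrightarrow> S = {} \<or> k = 0"
  by (auto simp: scaled_indicator_def fun_eq_iff)

lemma scaled_indicator_mult: "scaled_indicator S (k * d) = (\<lambda>v. k * scaled_indicator S d v)"
  by (auto simp: scaled_indicator_def fun_eq_iff)

lemma scaled_indicator_add: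
  "scaled_indicator S (a + b) = (\<lambda>v. scaled_indicator S a v + scaled_indicator S b v)"
  by (auto simp: scaled_indicator_def fun_eq_iff)

lemma Max_scaled_indicator:
  assumes "finite V" "S \<subseteq> V" "S \<noteq> {}"
  shows "Max (scaled_indicator S k ` V) = k"
  using assms by (intro Max_eqI) (auto simp: scaled_indicator_def)

lemma lift_realizable_eq_scaled_indicator:
  assumes tg: "tanner_graph V C E" and p: "lift_realizable V C E p"
    and nt: "\<not> property_Theta C E (support V p)" and u: "u \<in> support V p"
  shows "p = scaled_indicator (support V p) (p u)"
proof
  fix v show "p v = scaled_indicator (support V p) (p u) v"
    using lift_realizable_const_on[OF tg p _ nt _ u, of v] lift_realizable_outside[OF p, of v]
    by (auto simp: scaled_indicator_def support_def)
qed

text \<open>Double counting the copies assigned 1 around the copies of a check node: every check copy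
  sees an even number of them, while each of the odd number of neighbours in S contributes k.\<close>
lemma lift_realizable_scaled_indicator_even:
  assumes tg: "tanner_graph V C E" and SV: "S \<subseteq> V" and p: "lift_realizable V C E (scaled_indicator S k)"
    and c: "c \<in> C" and odd: "odd (card {v \<in> S. (v, c) \<in> E})"
  shows "even k"
proof -
  obtain l pi x where bij: "\<And>e. e \<in> E \<Longrightarrow> bij_betw (pi e) {..<l} {..<l}"
    and cw: "lift_codeword C E l pi x"
    and p_eq: "\<And>v. scaled_indicator S k v = (if v \<in> V then card {i. i < l \<and> x (v, i)} else 0)"
    by (rule lift_realizableE[OF p]) blast
  have finV: "finite V" using tg by (simp add: tanner_graph_def)
  define N where "N = {v \<in> S. (v, c) \<in> E}"
  have finN: "finite N" using finite_subset[OF SV finV] by (simp add: N_def)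
  define B where "B = {(v, i). (v, c) \<in> E \<and> i < l \<and> x (v, i)}"
  have B_Sigma: "B = Sigma N (\<lambda>v. {i. i < l \<and> x (v, i)})"
  proof (intro equalityI subsetI)
    fix vi assume "vi \<in> B"
    then obtain v i where vi: "vi = (v, i)" "(v, c) \<in> E" "i < l" "x (v, i)" by (auto simp: B_def)
    then have "v \<in> support V (scaled_indicator S k)" by (intro support_of_lift_one[OF tg p_eq])
    then show "vi \<in> Sigma N (\<lambda>v. {i. i < l \<and> x (v, i)})"
      using vi by (auto simp: N_def support_def scaled_indicator_def split: if_splits)
  qed (auto simp: B_def N_def)
  have finB: "finite B" using finN by (simp add: B_Sigma)
  have "card B = (\<Sum>v\<in>N. card {i. i < l \<and> x (v, i)})"
    unfolding B_Sigma using finN by (simp add: card_SigmaI)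
  also have "\<dots> = (\<Sum>v\<in>N. k)"
  proof (rule sum.cong)
    fix v assume "v \<in> N"
    then show "card {i. i < l \<and> x (v, i)} = k" using SV p_eq[of v] by (auto simp: N_def scaled_indicator_def)
  qed simp
  also have "\<dots> = card N * k" by simp
  finally have card_B: "card B = card N * k" .
  have "(\<lambda>(v, i). pi (v, c) i) ` B \<subseteq> {..<l}" using bij by (auto simp: B_def bij_betw_def)
  from sum.group[OF finB finite_lessThan this, where h = "\<lambda>_. 1 :: nat"]
  have "card B = (\<Sum>j<l. card {b \<in> B. (\<lambda>(v, i). pi (v, c) i) b = j})" by simp
  also have "\<dots> = (\<Sum>j<l. card (ones_at_check E l pi x c j))"
    by (intro sum.cong refl arg_cong[where f = card]) (auto simp: B_def ones_at_check_def)
  finally have "even (card B)"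
    using cw c by (simp add: lift_codeword_iff) (intro dvd_sum, simp)
  with card_B odd show ?thesis by (simp add: N_def)
qed

lemma lift_realizable_scaled_indicator_one:
  assumes SV: "S \<subseteq> V" and even: "\<forall>c\<in>C. even (card {v \<in> S. (v, c) \<in> E})"
  shows "lift_realizable V C E (scaled_indicator S 1)"
  unfolding lift_realizable_def
proof (intro exI conjI)
  show "(1::nat) \<ge> 1" ..
  show "\<forall>e\<in>E. bij_betw ((\<lambda>_. id) e) {..<1} {..<1}" by simp
  show "lift_codeword C E 1 (\<lambda>_. id) (\<lambda>(v, i). v \<in> S)"
    unfolding lift_codeword_iff
  proof (intro ballI allI impI)
    fix c and j :: nat assume c: "c \<in> C" and "j < 1"
    then have "ones_at_check E 1 (\<lambda>_. id) (\<lambda>(v, i). v \<in> S) c j = (\<lambda>v. (v, 0)) ` {v \<in> S. (v, c) \<in> E}"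
      by (auto simp: ones_at_check_def)
    then show "even (card (ones_at_check E 1 (\<lambda>_. id) (\<lambda>(v, i). v \<in> S) c j))"
      using even c by (simp add: card_image inj_on_def)
  qed
  show "\<forall>v. scaled_indicator S 1 v = (if v \<in> V then card {i. i < (1::nat) \<and> (\<lambda>(v, i). v \<in> S) (v, i)} else 0)"
    using SV by (auto simp: scaled_indicator_def)
qed

lemma stopping_set_other_neighbour:
  assumes tg: "tanner_graph V C E" and st: "stopping_set V C E S"
    and v: "v \<in> S" "(v, c) \<in> E"
  obtains w where "w \<in> S" "(w, c) \<in> E" "w \<noteq> v"
proof -
  have "S \<subseteq> V" "finite V" "c \<in> C" using tg st v by (auto simp: tanner_graph_def stopping_set_def)
  then have fin: "finite {w \<in> S. (w, c) \<in> E}" by (simp add: finite_subset)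
  have "card {w \<in> S. (w, c) \<in> E} \<ge> 2" using st v \<open>c \<in> C\<close> by (auto simp: stopping_set_def)
  with fin v have "card ({w \<in> S. (w, c) \<in> E} - {v}) \<noteq> 0" by (simp add: card_Diff_singleton)
  then have "{w \<in> S. (w, c) \<in> E} - {v} \<noteq> {}" by (metis card.empty)
  with that show thesis by blast
qed

lemma transpose_lt_2_iff: "h < 3 \<Longrightarrow> j < 3 \<Longrightarrow> transpose h 2 j < 2 \<longleftrightarrow> j \<noteq> (h::nat)"
  by (auto simp: transpose_def)

text \<open>The edge (v, c) routes copy 2 of v, the one not assigned 1, to the check copy hole v c.\<close>
lemma card_ones_at_check_transpose:
  fixes hole :: "'v \<Rightarrow> 'c \<Rightarrow> nat"
  assumes hole_lt: "\<And>v. hole v c < 3" and j: "j < 3"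
  shows "card (ones_at_check E 3 (\<lambda>(v, c). transpose (hole v c) 2) (\<lambda>(v, i). v \<in> S \<and> i < 2) c j)
    = card {v \<in> S. (v, c) \<in> E \<and> hole v c \<noteq> j}"
proof -
  let ?pi = "\<lambda>(v, c). transpose (hole v c) 2" and ?x = "\<lambda>(v, i). v \<in> S \<and> i < (2::nat)"
  have "ones_at_check E 3 ?pi ?x c j = (\<lambda>v. (v, transpose (hole v c) 2 j)) ` {v \<in> S. (v, c) \<in> E \<and> hole v c \<noteq> j}"
  proof (intro equalityI subsetI)
    fix vi assume "vi \<in> ones_at_check E 3 ?pi ?x c j"
    then obtain v i where vi: "vi = (v, i)" "(v, c) \<in> E" "v \<in> S" "i < 2" "transpose (hole v c) 2 i = j"
      by (auto simp: ones_at_check_def)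
    then have "i = transpose (hole v c) 2 j" by auto
    with vi transpose_lt_2_iff[OF hole_lt j]
    show "vi \<in> (\<lambda>v. (v, transpose (hole v c) 2 j)) ` {v \<in> S. (v, c) \<in> E \<and> hole v c \<noteq> j}"
      by auto
  next
    fix vi assume "vi \<in> (\<lambda>v. (v, transpose (hole v c) 2 j)) ` {v \<in> S. (v, c) \<in> E \<and> hole v c \<noteq> j}"
    then obtain v where v: "vi = (v, transpose (hole v c) 2 j)" "v \<in> S" "(v, c) \<in> E" "hole v c \<noteq> j"
      by blast
    then have "transpose (hole v c) 2 j < 2" using transpose_lt_2_iff[OF hole_lt j] by blast
    with v show "vi \<in> ones_at_check E 3 ?pi ?x c j" by (auto simp: ones_at_check_def)
  qed
  then show ?thesis by (simp add: card_image inj_on_def)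
qed

lemma even_card_hole_ne:
  assumes fin: "finite N" and ab: "a \<in> N" "b \<in> N" "a \<noteq> b" and odd: "odd (card N)"
    and j: "j < 3"
  shows "even (card {v \<in> N. (if v = a then 0 else if v = b then 1 else 2::nat) \<noteq> j})"
proof -
  have "j = 0 \<or> j = 1 \<or> j = 2" using j by auto
  then show ?thesis
  proof (elim disjE)
    assume "j = 0"
    then have "{v \<in> N. (if v = a then 0 else if v = b then 1 else 2::nat) \<noteq> j} = N - {a}" using ab by auto
    then show ?thesis using odd ab fin by (simp add: card_Diff_singleton)
  next
    assume "j = 1"
    then have "{v \<in> N. (if v = a then 0 else if v = b then 1 else 2::nat) \<noteq> j} = N - {b}" using ab by auto
    then show ?thesis using odd ab fin by (simp add: card_Diff_singleton)
  next
    assume "j = 2"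
    then have "{v \<in> N. (if v = a then 0 else if v = b then 1 else 2::nat) \<noteq> j} = {a, b}" using ab by auto
    then show ?thesis using ab by simp
  qed
qed

text \<open>At a check node with an odd number of neighbours in S, two of them get the holes 0 and 1,
  all others the hole 2; then every check copy sees an even number of ones.\<close>
lemma lift_realizable_scaled_indicator_two:
  assumes tg: "tanner_graph V C E" and st: "stopping_set V C E S"
  shows "lift_realizable V C E (scaled_indicator S 2)"
proof -
  have SV: "S \<subseteq> V" using st by (simp add: stopping_set_def)
  define N where "N c = {v \<in> S. (v, c) \<in> E}" for c
  have finN: "finite (N c)" for c
    using tg SV by (auto simp: tanner_graph_def N_def intro: finite_subset)
  have "\<exists>a b. a \<in> N c \<and> b \<in> N c \<and> a \<noteq> b" if odd_c: "odd (card (N c))" for c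
  proof -
    have "N c \<noteq> {}" using odd_c by auto
    then obtain a where a: "a \<in> S" "(a, c) \<in> E" by (auto simp: N_def)
    then obtain b where "b \<in> S" "(b, c) \<in> E" "b \<noteq> a" by (rule stopping_set_other_neighbour[OF tg st])
    with a show ?thesis by (auto simp: N_def)
  qed
  then obtain a b where ab: "\<And>c. odd (card (N c)) \<Longrightarrow> a c \<in> N c \<and> b c \<in> N c \<and> a c \<noteq> b c"
    by metis
  define hole where
    "hole v c = (if odd (card (N c)) \<and> v = a c then 0 else if odd (card (N c)) \<and> v = b c then 1 else 2::nat)"
    for v c
  have hole_lt: "hole v c < 3" for v c by (simp add: hole_def)
  have even_ones: "even (card {v \<in> N c. hole v c \<noteq> j})" if "j < 3" for c j
  proof (cases "odd (card (N c))")
    case False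
    then have "{v \<in> N c. hole v c \<noteq> j} = (if j = 2 then {} else N c)" by (auto simp: hole_def)
    with False show ?thesis by simp
  next
    case True
    then have hole_c: "hole v c = (if v = a c then 0 else if v = b c then 1 else 2)" for v
      by (simp add: hole_def)
    from True ab have "a c \<in> N c" "b c \<in> N c" "a c \<noteq> b c" by auto
    then show ?thesis unfolding hole_c by (rule even_card_hole_ne[OF finN _ _ _ True that])
  qed
  define pi where "pi = (\<lambda>(v, c). transpose (hole v c) (2::nat))"
  define x where "x = (\<lambda>(v, i). v \<in> S \<and> i < (2::nat))"
  have "lift_codeword C E 3 pi x"
    using card_ones_at_check_transpose[where hole = hole, OF hole_lt] even_ones
    by (simp add: lift_codeword_iff pi_def x_def N_def conj_assoc)
  moreover have "\<forall>e\<in>E. bij_betw (pi e) {..<3} {..<3}"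
    using hole_lt by (auto simp: pi_def)
  moreover have "scaled_indicator S 2 v = (if v \<in> V then card {i. i < 3 \<and> x (v, i)} else 0)" for v
  proof -
    have "{i. i < 3 \<and> x (v, i)} = (if v \<in> S then {..<2} else {})" by (auto simp: x_def)
    then show ?thesis using SV by (auto simp: scaled_indicator_def)
  qed
  ultimately show ?thesis unfolding lift_realizable_def by (intro exI[of _ 3]) auto
qed

lemma lift_realizable_scaled_indicator_iff_dvd:
  assumes tg: "tanner_graph V C E" and st: "stopping_set V C E S"
  defines "d \<equiv> if \<forall>c\<in>C. even (card {v \<in> S. (v, c) \<in> E}) then 1 else 2 :: nat"
  shows "lift_realizable V C E (scaled_indicator S k) \<longleftrightarrow> d dvd k"
proof (cases "\<forall>c\<in>C. even (card {v \<in> S. (v, c) \<in> E})")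
  case True
  have SV: "S \<subseteq> V" using st by (simp add: stopping_set_def)
  from lift_realizable_mult[OF lift_realizable_scaled_indicator_one[OF SV True], of k] True show ?thesis
    by (simp add: d_def scaled_indicator_mult[of _ k 1, simplified])
next
  case False
  then obtain c where c: "c \<in> C" "odd (card {v \<in> S. (v, c) \<in> E})" by blast
  have "even k" if "lift_realizable V C E (scaled_indicator S k)"
    using lift_realizable_scaled_indicator_even[OF tg _ that c] st by (simp add: stopping_set_def)
  moreover have "lift_realizable V C E (scaled_indicator S (2 * t))" for t
    using lift_realizable_mult[OF lift_realizable_scaled_indicator_two[OF tg st], of t]
    by (simp add: scaled_indicator_mult[of S t 2, symmetric] mult.commute)
  ultimately show ?thesis using False by (auto simp: d_def)
qed

section \<open>Irreducible pseudocodewords\<close>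

lemma indecomposable_multiples_iff:
  fixes d k :: nat
  assumes "d \<ge> 1" "k \<ge> 1"
  shows "d dvd k \<and> \<not> (\<exists>a b. a \<ge> 1 \<and> b \<ge> 1 \<and> k = a + b \<and> d dvd a \<and> d dvd b) \<longleftrightarrow> k = d"
proof
  assume "d dvd k \<and> \<not> (\<exists>a b. a \<ge> 1 \<and> b \<ge> 1 \<and> k = a + b \<and> d dvd a \<and> d dvd b)"
  then obtain t where "k = d * t" and indec: "\<not> (\<exists>a b. a \<ge> 1 \<and> b \<ge> 1 \<and> k = a + b \<and> d dvd a \<and> d dvd b)"
    by blast
  with assms have "t \<ge> 1" by (cases t) auto
  have "t = 1"
  proof (rule ccontr)
    assume "t \<noteq> 1"
    with \<open>t \<ge> 1\<close> have "d * (t - 1) \<ge> 1" using assms(1) by simp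
    moreover have "k = d + d * (t - 1)" using \<open>k = d * t\<close> \<open>t \<ge> 1\<close> by (cases t) auto
    ultimately have "\<exists>a b. a \<ge> 1 \<and> b \<ge> 1 \<and> k = a + b \<and> d dvd a \<and> d dvd b"
      using assms(1) by (intro exI[of _ d] exI[of _ "d * (t - 1)"]) simp
    with indec show False by blast
  qed
  with \<open>k = d * t\<close> show "k = d" by simp
next
  assume "k = d"
  moreover have "\<not> (a \<ge> 1 \<and> b \<ge> 1 \<and> d = a + b \<and> d dvd a)" for a b
    using dvd_imp_le[of d a] by auto
  ultimately show "d dvd k \<and> \<not> (\<exists>a b. a \<ge> 1 \<and> b \<ge> 1 \<and> k = a + b \<and> d dvd a \<and> d dvd b)"
    by auto
qed

lemma lift_realizable_below_scaled_indicator: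
  assumes tg: "tanner_graph V C E" and ms: "minimal_stopping_set V C E S"
    and nt: "\<not> property_Theta C E S"
    and p: "lift_realizable V C E p" and nz: "p \<noteq> (\<lambda>_. 0)" and le: "\<And>v. p v \<le> scaled_indicator S k v"
  obtains a where "a \<ge> 1" "p = scaled_indicator S a"
proof -
  have "support V p \<subseteq> S"
  proof
    fix v assume "v \<in> support V p"
    with le[of v] show "v \<in> S" by (auto simp: support_def scaled_indicator_def split: if_splits)
  qed
  with ms stopping_set_support[OF tg p nz] have supp: "support V p = S"
    by (auto simp: minimal_stopping_set_def)
  then obtain u where u: "u \<in> support V p"
    using ms by (auto simp: minimal_stopping_set_def stopping_set_def)
  have "p = scaled_indicator S (p u)"
    using lift_realizable_eq_scaled_indicator[OF tg p _ u] nt supp by simp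
  moreover have "p u \<ge> 1" using u by (simp add: support_def)
  ultimately show thesis using that by blast
qed

lemma scaled_indicator_sum_list_split:
  assumes tg: "tanner_graph V C E" and ms: "minimal_stopping_set V C E S"
    and nt: "\<not> property_Theta C E S"
    and len: "length ps \<ge> 2" and ps: "\<forall>q\<in>set ps. lift_realizable V C E q \<and> q \<noteq> (\<lambda>_. 0)"
    and sum: "scaled_indicator S k = (\<lambda>v. \<Sum>q\<leftarrow>ps. q v)"
  obtains a b where "a \<ge> 1" "b \<ge> 1" "k = a + b"
    "lift_realizable V C E (scaled_indicator S a)" "lift_realizable V C E (scaled_indicator S b)"
proof -
  from len obtain q q' rest where ps_eq: "ps = q # q' # rest" by (cases ps; cases "tl ps") auto
  define r where "r = (\<lambda>v. \<Sum>q\<leftarrow>q' # rest. q v)"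
  have sum': "scaled_indicator S k = (\<lambda>v. q v + r v)" using sum by (simp add: ps_eq r_def)
  have q: "lift_realizable V C E q" "q \<noteq> (\<lambda>_. 0)" using ps by (simp_all add: ps_eq)
  have r: "lift_realizable V C E r" unfolding r_def using ps by (intro lift_realizable_sum_list) (simp add: ps_eq)
  have "r \<noteq> (\<lambda>_. 0)" using ps by (auto simp: ps_eq r_def fun_eq_iff)
  moreover have "r v \<le> scaled_indicator S k v" for v by (simp add: sum')
  ultimately obtain b where b: "b \<ge> 1" "r = scaled_indicator S b"
    by (rule lift_realizable_below_scaled_indicator[OF tg ms nt r])
  have "q v \<le> scaled_indicator S k v" for v by (simp add: sum')
  then obtain a where a: "a \<ge> 1" "q = scaled_indicator S a"
    by (rule lift_realizable_below_scaled_indicator[OF tg ms nt q])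
  obtain u where u: "u \<in> S" using ms by (auto simp: minimal_stopping_set_def stopping_set_def)
  have "k = a + b" using fun_cong[OF sum', of u] a b u by (simp add: scaled_indicator_def)
  with a b q r show thesis using that by blast
qed

lemma irreducible_scaled_indicator_iff:
  assumes tg: "tanner_graph V C E" and ms: "minimal_stopping_set V C E S"
    and nt: "\<not> property_Theta C E S" and k: "k \<ge> 1"
  shows "irreducible_pcw V C E (scaled_indicator S k) \<longleftrightarrow>
    lift_realizable V C E (scaled_indicator S k) \<and>
    \<not> (\<exists>a b. a \<ge> 1 \<and> b \<ge> 1 \<and> k = a + b \<and>
        lift_realizable V C E (scaled_indicator S a) \<and> lift_realizable V C E (scaled_indicator S b))"
    (is "_ \<longleftrightarrow> _ \<and> \<not> ?decomposable")
proof -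
  have nz: "scaled_indicator S a \<noteq> (\<lambda>_. 0)" if "a \<ge> 1" for a
    using ms that by (simp add: scaled_indicator_eq_zero_iff minimal_stopping_set_def stopping_set_def)
  have "(\<exists>ps. length ps \<ge> 2 \<and> (\<forall>q\<in>set ps. lift_realizable V C E q \<and> q \<noteq> (\<lambda>_. 0)) \<and>
          scaled_indicator S k = (\<lambda>v. \<Sum>q\<leftarrow>ps. q v)) \<longleftrightarrow> ?decomposable"
  proof
    assume "\<exists>ps. length ps \<ge> 2 \<and> (\<forall>q\<in>set ps. lift_realizable V C E q \<and> q \<noteq> (\<lambda>_. 0)) \<and>
          scaled_indicator S k = (\<lambda>v. \<Sum>q\<leftarrow>ps. q v)"
    then show ?decomposable by (metis scaled_indicator_sum_list_split[OF tg ms nt])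
  next
    assume ?decomposable
    then obtain a b where "a \<ge> 1" "b \<ge> 1" "k = a + b"
      "lift_realizable V C E (scaled_indicator S a)" "lift_realizable V C E (scaled_indicator S b)" by blast
    then show "\<exists>ps. length ps \<ge> 2 \<and> (\<forall>q\<in>set ps. lift_realizable V C E q \<and> q \<noteq> (\<lambda>_. 0)) \<and>
          scaled_indicator S k = (\<lambda>v. \<Sum>q\<leftarrow>ps. q v)"
      using nz by (intro exI[of _ "[scaled_indicator S a, scaled_indicator S b]"]) (simp add: scaled_indicator_add)
  qed
  then show ?thesis using nz[OF k] by (simp add: irreducible_pcw_def)
qed

lemma max_components_eq:
  assumes tg: "tanner_graph V C E" and ms: "minimal_stopping_set V C E S"
    and nt: "\<not> property_Theta C E S"
  shows "max_components V C E S = {k. k \<ge> 1 \<and> irreducible_pcw V C E (scaled_indicator S k)}"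
proof -
  have S: "S \<subseteq> V" "S \<noteq> {}" using ms by (auto simp: minimal_stopping_set_def stopping_set_def)
  have finV: "finite V" using tg by (simp add: tanner_graph_def)
  show ?thesis
  proof (intro equalityI subsetI)
    fix k assume "k \<in> max_components V C E S"
    then obtain p where p: "irreducible_pcw V C E p" "support V p = S" "k = Max (p ` V)"
      by (auto simp: max_components_def)
    obtain u where u: "u \<in> S" using S by blast
    have "p = scaled_indicator S (p u)"
      using lift_realizable_eq_scaled_indicator[OF tg _ _, of p u] p nt u by (simp add: irreducible_pcw_def)
    moreover have "p u \<ge> 1" using u p(2) by (auto simp: support_def)
    ultimately show "k \<in> {k. k \<ge> 1 \<and> irreducible_pcw V C E (scaled_indicator S k)}"
      using p Max_scaled_indicator[OF finV S] by (metis mem_Collect_eq)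
  next
    fix k assume "k \<in> {k. k \<ge> 1 \<and> irreducible_pcw V C E (scaled_indicator S k)}"
    then show "k \<in> max_components V C E S"
      using support_scaled_indicator[OF S(1)] Max_scaled_indicator[OF finV S]
      unfolding max_components_def by (intro CollectI exI[of _ "scaled_indicator S k"]) auto
  qed
qed

theorem lemma6:
  fixes V :: "'v set" and C :: "'c set" and E :: "('v \<times> 'c) set" and S :: "'v set"
  assumes "tanner_graph V C E"
    and "minimal_stopping_set V C E S"
    and "\<not> property_Theta C E S"
  shows "finite (max_components V C E S) \<and> max_components V C E S \<noteq> {}
         \<and> (t_S V C E S = 1 \<or> t_S V C E S = 2)"
proof -
  note tg = assms(1) and ms = assms(2) and nt = assms(3)
  have st: "stopping_set V C E S" using ms by (simp add: minimal_stopping_set_def)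
  define d where "d = (if \<forall>c\<in>C. even (card {v \<in> S. (v, c) \<in> E}) then 1 else 2 :: nat)"
  have realizable: "lift_realizable V C E (scaled_indicator S k) \<longleftrightarrow> d dvd k" for k
    unfolding d_def by (rule lift_realizable_scaled_indicator_iff_dvd[OF tg st])
  have "d \<ge> 1" by (simp add: d_def)
  have "irreducible_pcw V C E (scaled_indicator S k) \<longleftrightarrow> k = d" if "k \<ge> 1" for k
    using irreducible_scaled_indicator_iff[OF tg ms nt that] indecomposable_multiples_iff[OF \<open>d \<ge> 1\<close> that]
    by (simp add: realizable)
  with \<open>d \<ge> 1\<close> have "max_components V C E S = {d}"
    by (auto simp: max_components_eq[OF tg ms nt])
  then show ?thesis by (simp add: t_S_def d_def)
qed

end
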